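(* Let $N\ge2$ and for $u=(u_1,\dots,u_N)$, $v=(v_1,\dots,v_N)$ define the $N\times N$ matrices (indices mod $N$) $U(u,\lambda)=\lambda\sum_{k=1}^N E_{k+1,k}+\sum_{k=1}^N u_kE_{kk}$, $V(v,\lambda)=I+\lambda^{-1}\sum_{k=1}^N v_kE_{k,k+1}$. Then the set of pairs $(U(u,\lambda),V(v,\lambda))$ is a Poisson submanifold of $\mathbf{g}=g\oplus g$ equipped with PB$(\mathbf{A},\mathbf{B},\mathbf{C},\mathbf{D})$, where the operators have components $\mathbf{A}=\begin{pmatrix}A&-B\\ C&A\end{pmatrix}$, $\mathbf{B}=\begin{pmatrix}B&B\\ B&-C\end{pmatrix}$, $\mathbf{C}=\begin{pmatrix}C&C\\ C&-B\end{pmatrix}$, $\mathbf{D}=\begin{pmatrix}D&-C\\ B&D\end{pmatrix}$.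
   Context: $E_{ij}$ are matrix units. $g$ is the twisted loop algebra of formal Laurent series $u(\lambda)=\sum_{p\le p_0}\sum_{i-j\equiv p\ (\mathrm{mod}\ N)}\lambda^pu^{(p)}_{ij}E_{ij}$ with form $\langle u,v\rangle=\mathrm{tr}(u(\lambda)v(\lambda))_0$ (coefficient of $\lambda^0$). $g_k$: elements containing only $\lambda^k$; $g_\pm=\bigoplus_{\pm k>0}g_k$; $P_+,P_-,P_0$ projections onto $g_+,g_-,g_0$; $R_0=P_+-P_-$; $\Pi(E_{jj})=\sum_k\pi_{jk}E_{kk}$ with $\pi_{jk}=1$ ($j>k$), $-1$ ($j<k$), $0$ ($j=k$), extended as $\Pi\circ P_0$; $A=\frac12(R_0+\Pi)$, $D=\frac12(R_0-\Pi)$, $B=\frac12(P_0-\Pi)$, $C=\frac12(P_0+\Pi)$. $\mathbf{g}=g\oplus g$ with componentwise multiplication and form $\langle\langle\mathbf{u},\mathbf{v}\rangle\rangle=\sum_k\langle u_k,v_k\rangle$; a matrix of operators $(X_{ij})$ acts by $(\mathbf{X}(\mathbf{u}))_i=\sum_jX_{ij}(u_j)$. For smooth $\Phi$ on $\mathbf{g}$, $\nabla_j\Phi$ is the $j$-th gradient component, $d_j\Phi=u_j\nabla_j\Phi$, $d'_j\Phi=\nabla_j\Phi\,u_j$, and PB$(\mathbf{A},\mathbf{B},\mathbf{C},\mathbf{D})$ is $\{\Phi,\Psi\}=\sum_{i,j}\big(\langle A_{ij}(d'_j\Phi),d'_i\Psi\rangle-\langle D_{ij}(d_j\Phi),d_i\Psi\rangle+\langle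 B_{ij}(d_j\Phi),d'_i\Psi\rangle-\langle C_{ij}(d'_j\Phi),d_i\Psi\rangle\big)$. A Poisson submanifold is one to which all Hamiltonian vector fields of the bracket are tangent. *)

theory Defs
  imports Complex_Main
begin

text \<open>An element of the twisted loop algebra g (N x N matrices, indices 0..N-1,
  real coefficients) is represented by its coefficient function:
  u p i j is the coefficient of lambda^p in the (i,j) entry.\<close>
type_synonym loop = "int \<Rightarrow> nat \<Rightarrow> nat \<Rightarrow> real"

definition in_g :: "nat \<Rightarrow> loop \<Rightarrow> bool" where
  "in_g N u \<longleftrightarrow>
     (\<forall>p i j. (N \<le> i \<or> N \<le> j) \<longrightarrow> u p i j = 0) \<and>
     (\<exists>p0. \<forall>p i j. p0 < p \<longrightarrow> u p i j = 0) \<and>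
     (\<forall>p i j. u p i j \<noteq> 0 \<longrightarrow> (int i - int j) mod int N = p mod int N)"

text \<open>Product of formal Laurent series (the sum over p is finite for elements of g).\<close>
definition lmul :: "nat \<Rightarrow> loop \<Rightarrow> loop \<Rightarrow> loop" where
  "lmul N u v = (\<lambda>r i j.
     \<Sum>p \<in> {p. u p \<noteq> (\<lambda>_ _. 0) \<and> v (r - p) \<noteq> (\<lambda>_ _. 0)}.
        \<Sum>k<N. u p i k * v (r - p) k j)"

definition lpair :: "nat \<Rightarrow> loop \<Rightarrow> loop \<Rightarrow> real" where
  "lpair N u v = (\<Sum>i<N. lmul N u v 0 i i)"

definition ladd :: "loop \<Rightarrow> loop \<Rightarrow> loop" where
  "ladd u v = (\<lambda>p i j. u p i j + v p i j)"
definition lsub :: "loop \<Rightarrow> loop \<Rightarrow> loop" where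
  "lsub u v = (\<lambda>p i j. u p i j - v p i j)"
definition lneg :: "loop \<Rightarrow> loop" where
  "lneg u = (\<lambda>p i j. - u p i j)"
definition lhalf :: "loop \<Rightarrow> loop" where
  "lhalf u = (\<lambda>p i j. u p i j / 2)"

definition Pplus :: "loop \<Rightarrow> loop" where
  "Pplus u = (\<lambda>p. if 0 < p then u p else (\<lambda>_ _. 0))"
definition Pminus :: "loop \<Rightarrow> loop" where
  "Pminus u = (\<lambda>p. if p < 0 then u p else (\<lambda>_ _. 0))"
definition Pzero :: "loop \<Rightarrow> loop" where
  "Pzero u = (\<lambda>p. if p = 0 then u p else (\<lambda>_ _. 0))"

definition R0 :: "loop \<Rightarrow> loop" where
  "R0 u = lsub (Pplus u) (Pminus u)"

definition piI :: "nat \<Rightarrow> nat \<Rightarrow> real" where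
  "piI j k = (if k < j then 1 else if j < k then -1 else 0)"

text \<open>Pi(E_jj) = sum_k pi_jk E_kk, extended as Pi o P_0 (g_0 = diagonal matrices).\<close>
definition PiOp :: "nat \<Rightarrow> loop \<Rightarrow> loop" where
  "PiOp N u = (\<lambda>p i j. if p = 0 \<and> i = j \<and> i < N
                        then (\<Sum>l<N. piI l i * u 0 l l) else 0)"

definition Aop :: "nat \<Rightarrow> loop \<Rightarrow> loop" where
  "Aop N u = lhalf (ladd (R0 u) (PiOp N u))"
definition Dop :: "nat \<Rightarrow> loop \<Rightarrow> loop" where
  "Dop N u = lhalf (lsub (R0 u) (PiOp N u))"
definition Bop :: "nat \<Rightarrow> loop \<Rightarrow> loop" where
  "Bop N u = lhalf (lsub (Pzero u) (PiOp N u))"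
definition Cop :: "nat \<Rightarrow> loop \<Rightarrow> loop" where
  "Cop N u = lhalf (ladd (Pzero u) (PiOp N u))"

definition cmp :: "loop \<times> loop \<Rightarrow> nat \<Rightarrow> loop" where
  "cmp x k = (if k = 0 then fst x else snd x)"

definition in_gg :: "nat \<Rightarrow> loop \<times> loop \<Rightarrow> bool" where
  "in_gg N x \<longleftrightarrow> in_g N (fst x) \<and> in_g N (snd x)"

definition ggpair :: "nat \<Rightarrow> loop \<times> loop \<Rightarrow> loop \<times> loop \<Rightarrow> real" where
  "ggpair N x y = (\<Sum>k<2. lpair N (cmp x k) (cmp y k))"

type_synonym opmat = "nat \<Rightarrow> nat \<Rightarrow> loop \<Rightarrow> loop"

definition mk2 :: "(loop \<Rightarrow> loop) \<Rightarrow> (loop \<Rightarrow> loop) \<Rightarrow> (loop \<Rightarrow> loop) \<Rightarrow> (loop \<Rightarrow> loop) \<Rightarrow> opmat" where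
  "mk2 a b c d = (\<lambda>i j. if i = 0 then (if j = 0 then a else b) else (if j = 0 then c else d))"

definition boldA :: "nat \<Rightarrow> opmat" where
  "boldA N = mk2 (Aop N) (\<lambda>u. lneg (Bop N u)) (Cop N) (Aop N)"
definition boldB :: "nat \<Rightarrow> opmat" where
  "boldB N = mk2 (Bop N) (Bop N) (Bop N) (\<lambda>u. lneg (Cop N u))"
definition boldC :: "nat \<Rightarrow> opmat" where
  "boldC N = mk2 (Cop N) (Cop N) (Cop N) (\<lambda>u. lneg (Bop N u))"
definition boldD :: "nat \<Rightarrow> opmat" where
  "boldD N = mk2 (Dop N) (\<lambda>u. lneg (Cop N u)) (Bop N) (Dop N)"

text \<open>The bracket PB(A,B,C,D) at the point L, for functions Phi, Psi whose gradients
  at L are X = grad Phi(L) and Y = grad Psi(L):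
  d_j Phi = L_j X_j, d'_j Phi = X_j L_j.\<close>
definition PB :: "nat \<Rightarrow> opmat \<Rightarrow> opmat \<Rightarrow> opmat \<Rightarrow> opmat \<Rightarrow>
                  loop \<times> loop \<Rightarrow> loop \<times> loop \<Rightarrow> loop \<times> loop \<Rightarrow> real" where
  "PB N Ao Bo Co Do L X Y =
    (\<Sum>i<2. \<Sum>j<2.
        lpair N (Ao i j (lmul N (cmp X j) (cmp L j))) (lmul N (cmp Y i) (cmp L i))
      - lpair N (Do i j (lmul N (cmp L j) (cmp X j))) (lmul N (cmp L i) (cmp Y i))
      + lpair N (Bo i j (lmul N (cmp L j) (cmp X j))) (lmul N (cmp Y i) (cmp L i))
      - lpair N (Co i j (lmul N (cmp X j) (cmp L j))) (lmul N (cmp L i) (cmp Y i)))"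

text \<open>T is the value at L of the Hamiltonian vector field of a function Phi with
  gradient X at L:  d Psi(L)[T] = {Phi, Psi}(L) for every Psi (gradient Y).\<close>
definition is_hamvf :: "nat \<Rightarrow> opmat \<Rightarrow> opmat \<Rightarrow> opmat \<Rightarrow> opmat \<Rightarrow>
                  loop \<times> loop \<Rightarrow> loop \<times> loop \<Rightarrow> loop \<times> loop \<Rightarrow> bool" where
  "is_hamvf N Ao Bo Co Do L X T \<longleftrightarrow>
     in_gg N T \<and> (\<forall>Y. in_gg N Y \<longrightarrow> PB N Ao Bo Co Do L X Y = ggpair N T Y)"

text \<open>Tangent vectors to S at L: velocities at 0 of curves in S through L
  (coefficientwise differentiable).\<close>
definition tangent_vec :: "(loop \<times> loop) set \<Rightarrow> loop \<times> loop \<Rightarrow> loop \<times> loop \<Rightarrow> bool" where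
  "tangent_vec S L T \<longleftrightarrow>
     (\<exists>c e. 0 < e \<and> c 0 = L \<and> (\<forall>t. \<bar>t\<bar> < e \<longrightarrow> c t \<in> S) \<and>
        (\<forall>k p i j. ((\<lambda>t. cmp (c t) k p i j) has_real_derivative cmp T k p i j) (at 0)))"

definition poisson_submanifold :: "nat \<Rightarrow> opmat \<Rightarrow> opmat \<Rightarrow> opmat \<Rightarrow> opmat \<Rightarrow>
                  (loop \<times> loop) set \<Rightarrow> bool" where
  "poisson_submanifold N Ao Bo Co Do S \<longleftrightarrow>
     S \<subseteq> {x. in_gg N x} \<and>
     (\<forall>L\<in>S. \<forall>X. in_gg N X \<longrightarrow>
        (\<exists>T. is_hamvf N Ao Bo Co Do L X T \<and> tangent_vec S L T))"

definition Umat :: "nat \<Rightarrow> (nat \<Rightarrow> real) \<Rightarrow> loop" where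
  "Umat N u = (\<lambda>p i j.
     (if p = 1 \<and> i < N \<and> j < N \<and> i = (j + 1) mod N then 1 else 0)
   + (if p = 0 \<and> i = j \<and> i < N then u i else 0))"

definition Vmat :: "nat \<Rightarrow> (nat \<Rightarrow> real) \<Rightarrow> loop" where
  "Vmat N v = (\<lambda>p i j.
     (if p = 0 \<and> i = j \<and> i < N then 1 else 0)
   + (if p = -1 \<and> i < N \<and> j < N \<and> j = (i + 1) mod N then v i else 0))"

definition UV_set :: "nat \<Rightarrow> (loop \<times> loop) set" where
  "UV_set N = {(Umat N u, Vmat N v) | u v. True}"

end

(*
  Moving L across the trace form, which is symmetric and associative on series bounded above in
  lambda, turns the bracket at L into  <<T, Y>>  with
    T_i = Sum_j  L_i A_ij(X_j L_j) - D_ij(L_j X_j) L_i + L_i B_ij(L_j X_j) - C_ij(X_j L_j) L_i,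
  so T is the Hamiltonian vector field of any function with gradient X at L.
  At L = (U(u), V(v)) multiplication by U or V merely shifts coefficients, and a coefficientwise
  computation, using the twisted grading of X, shows that the first component of T is a diagonal
  matrix in degree 0 and the second one is  lambda^-1 Sum_k t_k E_{k,k+1}.  Thus T is the velocity of
  the line  t -> (U(u + t du), V(v + t dv))  inside the set.
*)

theory Submission
  imports Defs
begin

lemma lmul_eq_sum_superset:
  assumes "finite A" "{p. u p \<noteq> (\<lambda>_ _. 0) \<and> v (r - p) \<noteq> (\<lambda>_ _. 0)} \<subseteq> A"
  shows "lmul N u v r i j = (\<Sum>p\<in>A. \<Sum>k<N. u p i k * v (r - p) k j)"
  unfolding lmul_def by (rule sum.mono_neutral_left[OF assms]) auto

lemma lmul_eq_sum_support_left:
  assumes "finite F" "\<And>p. p \<notin> F \<Longrightarrow> u p = (\<lambda>_ _. 0)"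
  shows "lmul N u v r i j = (\<Sum>p\<in>F. \<Sum>k<N. u p i k * v (r - p) k j)"
  by (rule lmul_eq_sum_superset) (use assms in auto)

lemma lmul_eq_sum_support_right:
  assumes "finite F" "\<And>q. q \<notin> F \<Longrightarrow> v q = (\<lambda>_ _. 0)"
  shows "lmul N u v r i j = (\<Sum>q\<in>F. \<Sum>k<N. u (r - q) i k * v q k j)"
proof -
  have "lmul N u v r i j = (\<Sum>p\<in>(\<lambda>q. r - q) ` F. \<Sum>k<N. u p i k * v (r - p) k j)"
  proof (rule lmul_eq_sum_superset)
    show "{p. u p \<noteq> (\<lambda>_ _. 0) \<and> v (r - p) \<noteq> (\<lambda>_ _. 0)} \<subseteq> (\<lambda>q. r - q) ` F"
    proof
      fix p assume "p \<in> {p. u p \<noteq> (\<lambda>_ _. 0) \<and> v (r - p) \<noteq> (\<lambda>_ _. 0)}"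
      then have "r - p \<in> F" using assms(2) by blast
      then show "p \<in> (\<lambda>q. r - q) ` F" by (rule image_eqI[rotated]) simp
    qed
  qed (use assms in simp)
  also have "\<dots> = (\<Sum>q\<in>F. \<Sum>k<N. u (r - q) i k * v q k j)"
    by (subst sum.reindex) (auto simp: inj_on_def)
  finally show ?thesis .
qed

text \<open>For series bounded above the sum defining \<open>lmul\<close> is finite; otherwise it may range over
  an infinite set and silently evaluate to \<open>0\<close>.\<close>

definition bounded_above :: "loop \<Rightarrow> bool" where
  "bounded_above u \<longleftrightarrow> (\<exists>P. \<forall>p>P. \<forall>i j. u p i j = 0)"

lemma bounded_above_if_in_g: "in_g N w \<Longrightarrow> bounded_above w"
  by (auto simp: in_g_def bounded_above_def)

lemma lmul_eq_sum_interval: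
  assumes "\<forall>p>P. \<forall>i j. u p i j = 0" "\<forall>q>Q. \<forall>i j. v q i j = 0" "M \<le> r - Q"
  shows "lmul N u v r i j = (\<Sum>p\<in>{M..P}. \<Sum>k<N. u p i k * v (r - p) k j)"
proof (rule lmul_eq_sum_superset)
  show "{p. u p \<noteq> (\<lambda>_ _. 0) \<and> v (r - p) \<noteq> (\<lambda>_ _. 0)} \<subseteq> {M..P}"
  proof
    fix p assume "p \<in> {p. u p \<noteq> (\<lambda>_ _. 0) \<and> v (r - p) \<noteq> (\<lambda>_ _. 0)}"
    then have "\<not> p > P" "\<not> r - p > Q" using assms(1,2) by (auto simp: fun_eq_iff)
    then show "p \<in> {M..P}" using assms(3) by auto
  qed
qed simp

lemma lmul_vanishes_above:
  assumes "\<forall>p>P. \<forall>i j. u p i j = 0" "\<forall>q>Q. \<forall>i j. v q i j = 0"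
  shows "\<forall>r>P + Q. \<forall>i j. lmul N u v r i j = 0"
  using lmul_eq_sum_interval[OF assms order_refl] by simp

lemma bounded_above_lmul: "bounded_above u \<Longrightarrow> bounded_above v \<Longrightarrow> bounded_above (lmul N u v)"
  unfolding bounded_above_def using lmul_vanishes_above by blast

lemma bounded_above_ladd: "bounded_above a \<Longrightarrow> bounded_above b \<Longrightarrow> bounded_above (ladd a b)"
  and bounded_above_lsub: "bounded_above a \<Longrightarrow> bounded_above b \<Longrightarrow> bounded_above (lsub a b)"
  unfolding bounded_above_def ladd_def lsub_def by (metis add.right_neutral diff_self max.strict_boundedE)+

lemma lpair_eq_sum:
  assumes "\<forall>p>P. \<forall>i j. u p i j = 0" "\<forall>q>Q. \<forall>i j. v q i j = 0" "M \<le> - Q"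
  shows "lpair N u v = (\<Sum>p\<in>{M..P}. \<Sum>i<N. \<Sum>k<N. u p i k * v (- p) k i)"
  using assms(3) unfolding lpair_def
  by (simp add: lmul_eq_sum_interval[OF assms(1,2), of M] sum.swap[where B = "{M..P}"])

lemma lpair_ladd:
  assumes "bounded_above a" "bounded_above b" "bounded_above y"
  shows "lpair N (ladd a b) y = lpair N a y + lpair N b y"
    and "lpair N (lsub a b) y = lpair N a y - lpair N b y"
proof -
  obtain P Q where P: "\<forall>p>P. \<forall>i j. a p i j = 0 \<and> b p i j = 0" and Q: "\<forall>q>Q. \<forall>i j. y q i j = 0"
    using assms unfolding bounded_above_def by (metis max.strict_boundedE)
  have "\<forall>p>P. \<forall>i j. a p i j = 0" "\<forall>p>P. \<forall>i j. b p i j = 0"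
    "\<forall>p>P. \<forall>i j. ladd a b p i j = 0" "\<forall>p>P. \<forall>i j. lsub a b p i j = 0"
    using P by (auto simp: ladd_def lsub_def)
  note sums = this[THEN lpair_eq_sum[OF _ Q order_refl]]
  show "lpair N (ladd a b) y = lpair N a y + lpair N b y"
    unfolding sums by (simp add: ladd_def distrib_right sum.distrib)
  show "lpair N (lsub a b) y = lpair N a y - lpair N b y"
    unfolding sums by (simp add: lsub_def left_diff_distrib sum_subtractf)
qed

lemma lpair_cong_block:
  assumes "bounded_above u" "bounded_above u'" "bounded_above y"
    and "\<And>p i j. i < N \<Longrightarrow> j < N \<Longrightarrow> u p i j = u' p i j"
  shows "lpair N u y = lpair N u' y"
proof -
  obtain P Q where P: "\<forall>p>P. \<forall>i j. u p i j = 0 \<and> u' p i j = 0" and Q: "\<forall>q>Q. \<forall>i j. y q i j = 0"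
    using assms(1-3) unfolding bounded_above_def by (metis max.strict_boundedE)
  have "\<forall>p>P. \<forall>i j. u p i j = 0" "\<forall>p>P. \<forall>i j. u' p i j = 0"
    using P by auto
  then show ?thesis
    by (simp add: lpair_eq_sum[OF _ Q order_refl] assms(4))
qed

lemma lpair_commute:
  assumes "bounded_above u" "bounded_above v"
  shows "lpair N u v = lpair N v u"
proof -
  obtain P Q where P: "\<forall>p>P. \<forall>i j. u p i j = 0" and Q: "\<forall>q>Q. \<forall>i j. v q i j = 0"
    using assms by (auto simp: bounded_above_def)
  have "lpair N v u = (\<Sum>q\<in>uminus ` {-Q..P}. \<Sum>i<N. \<Sum>k<N. v q i k * u (- q) k i)"
    using lpair_eq_sum[OF Q P, of "-P"] by (simp add: image_uminus_atLeastAtMost)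
  also have "\<dots> = (\<Sum>p\<in>{-Q..P}. \<Sum>i<N. \<Sum>k<N. u p k i * v (- p) i k)"
    by (subst sum.reindex) (auto simp: mult.commute)
  also have "\<dots> = lpair N u v"
    unfolding lpair_eq_sum[OF P Q order_refl] by (rule sum.cong[OF refl], rule sum.swap)
  finally show ?thesis by simp
qed

lemma lpair_lmul_assoc:
  assumes "bounded_above u" "bounded_above v" "bounded_above w"
  shows "lpair N (lmul N u v) w = lpair N u (lmul N v w)"
proof -
  obtain P Q S where P: "\<forall>p>P. \<forall>i j. u p i j = 0" and Q: "\<forall>q>Q. \<forall>i j. v q i j = 0"
    and S: "\<forall>s>S. \<forall>i j. w s i j = 0"
    using assms by (auto simp: bounded_above_def)
  define F where "F p q = (\<Sum>i<N. \<Sum>k<N. \<Sum>m<N. u p i m * v q m k * w (- p - q) k i)" for p q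
  have F_swap: "F p q = (\<Sum>i<N. \<Sum>m<N. \<Sum>k<N. u p i m * v q m k * w (- p - q) k i)" for p q
    unfolding F_def by (rule sum.cong[OF refl], rule sum.swap)
  have F_zero: "F p q = 0" if "Q < q \<or> S < - p - q" for p q
    using that Q S by (auto simp: F_def)
  have "lpair N (lmul N u v) w
      = (\<Sum>r\<in>{-S..P + Q}. \<Sum>i<N. \<Sum>k<N. lmul N u v r i k * w (- r) k i)"
    by (rule lpair_eq_sum[OF lmul_vanishes_above[OF P Q] S order_refl])
  also have "\<dots> = (\<Sum>r\<in>{-S..P + Q}. \<Sum>i<N. \<Sum>k<N.
                    (\<Sum>p\<in>{-S-Q..P}. \<Sum>m<N. u p i m * v (r - p) m k) * w (- r) k i)"
    by (rule sum.cong[OF refl], rule sum.cong[OF refl], rule sum.cong[OF refl])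
       (simp add: lmul_eq_sum_interval[OF P Q, of "-S-Q"])
  also have "\<dots> = (\<Sum>p\<in>{-S-Q..P}. \<Sum>r\<in>{-S..P + Q}. F p (r - p))"
    by (simp add: F_def sum_distrib_left sum_distrib_right mult.assoc sum.swap[where B = "{-S-Q..P}"])
  also have "\<dots> = (\<Sum>p\<in>{-S-Q..P}. \<Sum>q\<in>{-S-p..Q}. F p q)"
  proof (rule sum.cong[OF refl])
    fix p assume p: "p \<in> {-S-Q..P}"
    have "(\<Sum>r\<in>{-S..P + Q}. F p (r - p)) = (\<Sum>q\<in>{-S-p..P+Q-p}. F p q)"
      by (rule sum.reindex_bij_witness[of _ "\<lambda>q. q + p" "\<lambda>r. r - p"]) auto
    also have "\<dots> = (\<Sum>q\<in>{-S-p..Q}. F p q)"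
      by (rule sum.mono_neutral_right) (use p F_zero in auto)
    finally show "(\<Sum>r\<in>{-S..P + Q}. F p (r - p)) = (\<Sum>q\<in>{-S-p..Q}. F p q)" .
  qed
  also have "\<dots> = (\<Sum>p\<in>{-S-Q..P}. \<Sum>i<N. \<Sum>m<N. u p i m * lmul N v w (- p) m i)"
  proof (rule sum.cong[OF refl])
    fix p
    have "(\<Sum>q\<in>{-S-p..Q}. F p q)
        = (\<Sum>i<N. \<Sum>m<N. u p i m * (\<Sum>q\<in>{-S-p..Q}. \<Sum>k<N. v q m k * w (- p - q) k i))"
      by (simp only: F_swap sum_distrib_left mult.assoc sum.swap[of _ "{-S-p..Q}"])
    then show "(\<Sum>q\<in>{-S-p..Q}. F p q) = (\<Sum>i<N. \<Sum>m<N. u p i m * lmul N v w (- p) m i)"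
      by (simp add: lmul_eq_sum_interval[OF Q S, of "-S-p"])
  qed
  also have "\<dots> = lpair N u (lmul N v w)"
    by (rule lpair_eq_sum[OF P lmul_vanishes_above[OF Q S], symmetric]) simp
  finally show ?thesis .
qed

lemma lpair_lmul_rotate:
  assumes "bounded_above a" "bounded_above y" "bounded_above l"
  shows "lpair N a (lmul N y l) = lpair N (lmul N l a) y"
  using assms
  by (simp add: lpair_commute bounded_above_lmul lpair_lmul_assoc[of y l a, symmetric])

lemmas r_matrix_defs = Aop_def Dop_def Bop_def Cop_def lhalf_def ladd_def lsub_def lneg_def
  R0_def Pplus_def Pminus_def Pzero_def PiOp_def

lemma bounded_above_r_matrix_ops:
  assumes "bounded_above w"
  shows "bounded_above (Aop N w)" "bounded_above (Bop N w)" "bounded_above (Cop N w)"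
    "bounded_above (Dop N w)" "bounded_above (lneg (Bop N w))" "bounded_above (lneg (Cop N w))"
proof -
  obtain P where "\<forall>p>P. \<forall>i j. w p i j = 0" using assms by (auto simp: bounded_above_def)
  then have "\<forall>p>max P 0. \<forall>i j. Aop N w p i j = 0 \<and> Bop N w p i j = 0 \<and> Cop N w p i j = 0
      \<and> Dop N w p i j = 0 \<and> lneg (Bop N w) p i j = 0 \<and> lneg (Cop N w) p i j = 0"
    by (auto simp: r_matrix_defs)
  then show "bounded_above (Aop N w)" "bounded_above (Bop N w)" "bounded_above (Cop N w)"
    "bounded_above (Dop N w)" "bounded_above (lneg (Bop N w))" "bounded_above (lneg (Cop N w))"
    unfolding bounded_above_def by blast+
qed

definition preserves_bounded_above :: "opmat \<Rightarrow> bool" where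
  "preserves_bounded_above Ao \<longleftrightarrow> (\<forall>i j w. bounded_above w \<longrightarrow> bounded_above (Ao i j w))"

lemma preserves_bounded_above_bold:
  "preserves_bounded_above (boldA N)" "preserves_bounded_above (boldB N)"
  "preserves_bounded_above (boldC N)" "preserves_bounded_above (boldD N)"
  unfolding preserves_bounded_above_def boldA_def boldB_def boldC_def boldD_def mk2_def
  by (simp_all add: bounded_above_r_matrix_ops)

definition ham_term :: "nat \<Rightarrow> opmat \<Rightarrow> opmat \<Rightarrow> opmat \<Rightarrow> opmat \<Rightarrow>
    loop \<times> loop \<Rightarrow> loop \<times> loop \<Rightarrow> nat \<Rightarrow> nat \<Rightarrow> loop" where
  "ham_term N Ao Bo Co Do L X i j =
     lsub (ladd (lsub (lmul N (cmp L i) (Ao i j (lmul N (cmp X j) (cmp L j))))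
                      (lmul N (Do i j (lmul N (cmp L j) (cmp X j))) (cmp L i)))
                (lmul N (cmp L i) (Bo i j (lmul N (cmp L j) (cmp X j)))))
          (lmul N (Co i j (lmul N (cmp X j) (cmp L j))) (cmp L i))"

definition ham_field :: "nat \<Rightarrow> opmat \<Rightarrow> opmat \<Rightarrow> opmat \<Rightarrow> opmat \<Rightarrow>
    loop \<times> loop \<Rightarrow> loop \<times> loop \<Rightarrow> nat \<Rightarrow> loop" where
  "ham_field N Ao Bo Co Do L X i =
     ladd (ham_term N Ao Bo Co Do L X i 0) (ham_term N Ao Bo Co Do L X i 1)"

lemma bounded_above_ham_term:
  assumes ops: "preserves_bounded_above Ao" "preserves_bounded_above Bo"
      "preserves_bounded_above Co" "preserves_bounded_above Do"
    and L: "\<And>k. bounded_above (cmp L k)" and X: "\<And>k. bounded_above (cmp X k)"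
  shows "bounded_above (ham_term N Ao Bo Co Do L X i j)"
  using ops L X unfolding ham_term_def preserves_bounded_above_def
  by (simp add: bounded_above_ladd bounded_above_lsub bounded_above_lmul)

lemma PB_eq_lpair_ham_field:
  assumes ops: "preserves_bounded_above Ao" "preserves_bounded_above Bo"
      "preserves_bounded_above Co" "preserves_bounded_above Do"
    and L: "\<And>k. bounded_above (cmp L k)" and X: "\<And>k. bounded_above (cmp X k)"
    and Y: "\<And>k. bounded_above (cmp Y k)"
  shows "PB N Ao Bo Co Do L X Y = (\<Sum>i<2. lpair N (ham_field N Ao Bo Co Do L X i) (cmp Y i))"
proof -
  have XL: "bounded_above (lmul N (cmp X j) (cmp L j))" "bounded_above (lmul N (cmp L j) (cmp X j))"
    for j using L X by (simp_all add: bounded_above_lmul)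
  have bounded_op: "bounded_above (Ao i j a)" "bounded_above (Bo i j a)" "bounded_above (Co i j a)"
    "bounded_above (Do i j a)" if "bounded_above a" for i j a
    using ops that by (simp_all add: preserves_bounded_above_def)
  have "lpair N (Ao i j (lmul N (cmp X j) (cmp L j))) (lmul N (cmp Y i) (cmp L i))
      - lpair N (Do i j (lmul N (cmp L j) (cmp X j))) (lmul N (cmp L i) (cmp Y i))
      + lpair N (Bo i j (lmul N (cmp L j) (cmp X j))) (lmul N (cmp Y i) (cmp L i))
      - lpair N (Co i j (lmul N (cmp X j) (cmp L j))) (lmul N (cmp L i) (cmp Y i))
      = lpair N (ham_term N Ao Bo Co Do L X i j) (cmp Y i)" for i j
    using XL[of j] L[of i] Y[of i]
    by (simp add: ham_term_def lpair_ladd bounded_above_ladd bounded_above_lsub bounded_above_lmul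
        bounded_op lpair_lmul_rotate[of _ "cmp Y i" "cmp L i"]
        lpair_lmul_assoc[of _ "cmp L i" "cmp Y i", symmetric])
  then have "PB N Ao Bo Co Do L X Y = (\<Sum>i<2. \<Sum>j<2. lpair N (ham_term N Ao Bo Co Do L X i j) (cmp Y i))"
    by (simp add: PB_def)
  also have "\<dots> = (\<Sum>i<2. lpair N (ham_field N Ao Bo Co Do L X i) (cmp Y i))"
    by (simp add: ham_field_def lpair_ladd bounded_above_ham_term ops L X Y numeral_2_eq_2)
  finally show ?thesis .
qed

definition cyc_suc :: "nat \<Rightarrow> nat \<Rightarrow> nat" where
  "cyc_suc N i = (if i + 1 = N then 0 else i + 1)"

definition cyc_pred :: "nat \<Rightarrow> nat \<Rightarrow> nat" where
  "cyc_pred N i = (if i = 0 then N - 1 else i - 1)"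

lemma Suc_mod_eq_cyc_suc [simp]: "i < N \<Longrightarrow> Suc i mod N = cyc_suc N i"
  by (auto simp: cyc_suc_def)

lemma cyc_suc_less [simp]: "i < N \<Longrightarrow> cyc_suc N i < N"
  and cyc_pred_less [simp]: "i < N \<Longrightarrow> cyc_pred N i < N"
  and cyc_suc_pred [simp]: "i < N \<Longrightarrow> cyc_suc N (cyc_pred N i) = i"
  and cyc_pred_suc [simp]: "i < N \<Longrightarrow> cyc_pred N (cyc_suc N i) = i"
  by (auto simp: cyc_suc_def cyc_pred_def)

lemma cyc_suc_eq_iff: "i < N \<Longrightarrow> k < N \<Longrightarrow> cyc_suc N k = i \<longleftrightarrow> k = cyc_pred N i"
  and eq_cyc_suc_iff: "i < N \<Longrightarrow> k < N \<Longrightarrow> i = cyc_suc N k \<longleftrightarrow> k = cyc_pred N i"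
  by (auto simp: cyc_suc_def cyc_pred_def)

lemma int_cyc_suc: "j < N \<Longrightarrow> int (cyc_suc N j) = (int j + 1) mod int N"
  by (simp flip: Suc_mod_eq_cyc_suc add: zmod_int add.commute)

lemma cyc_suc_congruence:
  "j < N \<Longrightarrow> (int (cyc_suc N j) - int j) mod int N = 1 mod int N"
  "j < N \<Longrightarrow> (int j - int (cyc_suc N j)) mod int N = (-1) mod int N"
  by (simp_all add: int_cyc_suc mod_diff_left_eq mod_diff_right_eq)

lemma sum_cyc_pred_reindex: "(\<Sum>l<N. g (cyc_pred N l) l) = (\<Sum>l<N. g l (cyc_suc N l))"
proof -
  have "bij_betw (cyc_suc N) {..<N} {..<N}"
    by (rule bij_betw_byWitness[where f' = "cyc_pred N"]) auto
  from sum.reindex_bij_betw[OF this, of "\<lambda>m. g (cyc_pred N m) m"] show ?thesis by simp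
qed

lemma sum_piI_cyc_pred:
  assumes "i < N"
  shows "(\<Sum>l<N. piI l i * f l) = (\<Sum>l<N. piI l (cyc_pred N i) * f l) - f (cyc_pred N i) - f i
           + (if i = 0 then 2 * (\<Sum>l<N. f l) else 0)"
proof (cases "i = 0")
  case True
  have "(\<Sum>l<N. piI l i * f l) = (\<Sum>l<N. f l - (if l = 0 then f l else 0))"
    by (rule sum.cong) (auto simp: piI_def True)
  moreover have "(\<Sum>l<N. piI l (cyc_pred N i) * f l) = (\<Sum>l<N. (if l = N - 1 then f l else 0) - f l)"
    by (rule sum.cong) (auto simp: piI_def True cyc_pred_def)
  ultimately show ?thesis
    using assms True by (simp add: sum_subtractf cyc_pred_def)
next
  case False
  have "(\<Sum>l<N. piI l i * f l)
      = (\<Sum>l<N. piI l (cyc_pred N i) * f l - (if l = i - 1 then f l else 0) - (if l = i then f l else 0))"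
    by (rule sum.cong) (use False in \<open>auto simp: piI_def cyc_pred_def\<close>)
  moreover have "i - 1 < N" using assms by simp
  ultimately show ?thesis
    using assms False by (simp add: sum_subtractf cyc_pred_def)
qed

lemma in_g_index_congruence:
  assumes "in_g N w" "w p a b \<noteq> 0" "a < N"
  shows "int a = (int b + p) mod int N"
proof -
  have cong: "(int a - int b) mod int N = p mod int N"
    using assms(1,2) by (simp add: in_g_def)
  have "int a = int a mod int N"
    using assms(3) by (simp add: zmod_int)
  also have "\<dots> = ((int a - int b) mod int N + int b) mod int N"
    by (simp add: mod_add_left_eq)
  also have "\<dots> = (int b + p) mod int N"
    by (simp add: cong mod_add_right_eq add.commute)
  finally show ?thesis .
qed

lemma in_g_coeff_zero:
  assumes w: "in_g N w" and a: "a < N" and b: "b < N"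
  shows "a \<noteq> b \<Longrightarrow> w 0 a b = 0"
    and "a \<noteq> cyc_suc N b \<Longrightarrow> w 1 a b = 0"
    and "b \<noteq> cyc_suc N a \<Longrightarrow> w (-1) a b = 0"
proof -
  show "w 0 a b = 0" if "a \<noteq> b"
    using in_g_index_congruence[OF w _ a, of 0 b] that b by (auto simp: zmod_int)
  show "w 1 a b = 0" if "a \<noteq> cyc_suc N b"
    using in_g_index_congruence[OF w _ a, of 1 b] that int_cyc_suc[OF b] by auto
  show "w (-1) a b = 0" if "b \<noteq> cyc_suc N a"
  proof (rule ccontr)
    assume "w (-1) a b \<noteq> 0"
    then have "int a = (int b - 1) mod int N"
      using in_g_index_congruence[OF w _ a] by simp
    then have "int (cyc_suc N a) = int b"
      using b by (simp add: int_cyc_suc[OF a] mod_add_left_eq zmod_int)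
    then show False using that by simp
  qed
qed

lemma Umat_in_g: "in_g N (Umat N u)"
  unfolding in_g_def
  by (auto simp: Umat_def cyc_suc_congruence intro: exI[of _ 1])

lemma Vmat_in_g: "in_g N (Vmat N v)"
  unfolding in_g_def
  by (auto simp: Vmat_def cyc_suc_congruence intro: exI[of _ 0])

lemma lmul_Umat_left:
  assumes "i < N"
  shows "lmul N (Umat N u) w r i j = w (r - 1) (cyc_pred N i) j + u i * w r i j"
proof -
  have "lmul N (Umat N u) w r i j = (\<Sum>p\<in>{0,1}. \<Sum>k<N. Umat N u p i k * w (r - p) k j)"
    by (rule lmul_eq_sum_support_left) (auto simp: Umat_def fun_eq_iff)
  also have "\<dots> = (\<Sum>k<N. Umat N u 0 i k * w r k j + Umat N u 1 i k * w (r - 1) k j)"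
    by (simp add: sum.distrib)
  also have "\<dots> = (\<Sum>k<N. (if k = i then u i * w r k j else 0) + (if k = cyc_pred N i then w (r - 1) k j else 0))"
    using assms by (intro sum.cong) (auto simp: Umat_def eq_cyc_suc_iff)
  finally show ?thesis using assms by (simp add: sum.distrib)
qed

lemma lmul_Umat_right:
  assumes "j < N"
  shows "lmul N w (Umat N u) r i j = w (r - 1) i (cyc_suc N j) + w r i j * u j"
proof -
  have "lmul N w (Umat N u) r i j = (\<Sum>q\<in>{0,1}. \<Sum>k<N. w (r - q) i k * Umat N u q k j)"
    by (rule lmul_eq_sum_support_right) (auto simp: Umat_def fun_eq_iff)
  also have "\<dots> = (\<Sum>k<N. w r i k * Umat N u 0 k j + w (r - 1) i k * Umat N u 1 k j)"
    by (simp add: sum.distrib)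
  also have "\<dots> = (\<Sum>k<N. (if k = j then w r i k * u j else 0) + (if k = cyc_suc N j then w (r - 1) i k else 0))"
    using assms by (intro sum.cong) (auto simp: Umat_def)
  finally show ?thesis using assms by (simp add: sum.distrib)
qed

lemma lmul_Vmat_left:
  assumes "i < N"
  shows "lmul N (Vmat N v) w r i j = w r i j + v i * w (r + 1) (cyc_suc N i) j"
proof -
  have "lmul N (Vmat N v) w r i j = (\<Sum>p\<in>{0,-1}. \<Sum>k<N. Vmat N v p i k * w (r - p) k j)"
    by (rule lmul_eq_sum_support_left) (auto simp: Vmat_def fun_eq_iff)
  also have "\<dots> = (\<Sum>k<N. Vmat N v 0 i k * w r k j + Vmat N v (-1) i k * w (r + 1) k j)"
    by (simp add: sum.distrib)
  also have "\<dots> = (\<Sum>k<N. (if k = i then w r k j else 0) + (if k = cyc_suc N i then v i * w (r + 1) k j else 0))"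
    using assms by (intro sum.cong) (auto simp: Vmat_def)
  finally show ?thesis using assms by (simp add: sum.distrib)
qed

lemma lmul_Vmat_right:
  assumes "j < N"
  shows "lmul N w (Vmat N v) r i j = w r i j + w (r + 1) i (cyc_pred N j) * v (cyc_pred N j)"
proof -
  have "lmul N w (Vmat N v) r i j = (\<Sum>q\<in>{0,-1}. \<Sum>k<N. w (r - q) i k * Vmat N v q k j)"
    by (rule lmul_eq_sum_support_right) (auto simp: Vmat_def fun_eq_iff)
  also have "\<dots> = (\<Sum>k<N. w r i k * Vmat N v 0 k j + w (r + 1) i k * Vmat N v (-1) k j)"
    by (simp add: sum.distrib)
  also have "\<dots> = (\<Sum>k<N. (if k = j then w r i k else 0) + (if k = cyc_pred N j then w (r + 1) i k * v k else 0))"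
    using assms by (intro sum.cong) (auto simp: Vmat_def eq_cyc_suc_iff)
  finally show ?thesis using assms by (simp add: sum.distrib)
qed

abbreviation ham_UV :: "nat \<Rightarrow> (nat \<Rightarrow> real) \<Rightarrow> (nat \<Rightarrow> real) \<Rightarrow> loop \<times> loop \<Rightarrow> nat \<Rightarrow> loop"
  where
  "ham_UV N u v X \<equiv> ham_field N (boldA N) (boldB N) (boldC N) (boldD N) (Umat N u, Vmat N v) X"

lemmas ham_UV_unfold =
  ham_field_def ham_term_def cmp_def boldA_def boldB_def boldC_def boldD_def mk2_def

lemmas lmul_UV = lmul_Umat_left lmul_Umat_right lmul_Vmat_left lmul_Vmat_right

lemma ham_UV_U_vanishes:
  assumes X: "in_gg N X" and a: "a < N" and b: "b < N" and pab: "p \<noteq> 0 \<or> a \<noteq> b"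
  shows "ham_UV N u v X 0 p a b = 0"
proof -
  note X_zero = in_g_coeff_zero[of N "fst X"] in_g_coeff_zero[of N "snd X"]
  consider "p = 1" "b = cyc_pred N a" | "p = 1" "b \<noteq> cyc_pred N a" | "p = 0" "a \<noteq> b"
    | "2 \<le> p \<or> p \<le> -1"
    using pab by linarith
  then show ?thesis
  proof cases
    case 1
    \<comment> \<open>The only entry where the \<open>\<Pi>\<close>-parts of \<open>B\<close> and \<open>C\<close> survive, as the difference
      of \<open>\<Pi>\<close> at \<open>a\<close> and at \<open>a - 1\<close>; the traces of \<open>X\<close> it produces cancel after a cyclic shift.\<close>
    then show ?thesis using a b
      by (simp add: ham_UV_unfold lmul_UV r_matrix_defs sum_piI_cyc_pred[OF a])
        (simp add: field_simps sum.distrib sum_cyc_pred_reindex[of "fst X (-1)"]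
          sum_cyc_pred_reindex[of "\<lambda>x y. v x * snd X 1 y x"])
  qed (use a b X in \<open>auto simp: ham_UV_unfold lmul_UV r_matrix_defs in_gg_def X_zero
         cyc_suc_eq_iff eq_cyc_suc_iff field_simps\<close>)
qed

lemma ham_UV_V_vanishes:
  assumes X: "in_gg N X" and a: "a < N" and b: "b < N" and pab: "p \<noteq> -1 \<or> b \<noteq> cyc_suc N a"
  shows "ham_UV N u v X 1 p a b = 0"
proof -
  note X_zero = in_g_coeff_zero[of N "fst X"] in_g_coeff_zero[of N "snd X"]
  consider "1 \<le> p" | "p = 0" | "p = -1" "b \<noteq> cyc_suc N a" | "p \<le> -2"
    using pab by linarith
  then show ?thesis
  proof cases
    case 3
    then show ?thesis using a b X
      by (simp add: ham_UV_unfold lmul_UV r_matrix_defs in_gg_def X_zero cyc_suc_eq_iff eq_cyc_suc_iff)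
  qed (use a b in \<open>simp_all add: ham_UV_unfold lmul_UV r_matrix_defs field_simps\<close>)
qed

definition UV_velocity :: "nat \<Rightarrow> (nat \<Rightarrow> real) \<Rightarrow> (nat \<Rightarrow> real) \<Rightarrow> loop \<times> loop" where
  "UV_velocity N du dv =
     ((\<lambda>p i j. if p = 0 \<and> i = j \<and> i < N then du i else 0),
      (\<lambda>p i j. if p = -1 \<and> i < N \<and> j < N \<and> j = (i + 1) mod N then dv i else 0))"

lemma UV_velocity_in_gg: "in_gg N (UV_velocity N du dv)"
  unfolding in_gg_def UV_velocity_def in_g_def
  by (auto simp: cyc_suc_congruence intro: exI[of _ 0])

lemma tangent_vec_UV_velocity:
  "tangent_vec (UV_set N) (Umat N u, Vmat N v) (UV_velocity N du dv)"
  unfolding tangent_vec_def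
proof (intro exI conjI allI)
  let ?c = "\<lambda>t::real. (Umat N (\<lambda>i. u i + t * du i), Vmat N (\<lambda>i. v i + t * dv i))"
  show "?c 0 = (Umat N u, Vmat N v)" and "\<bar>t\<bar> < 1 \<longrightarrow> ?c t \<in> UV_set N" for t
    by (auto simp: UV_set_def)
  fix k p i j
  have affine: "cmp (?c t) k p i j
      = cmp (Umat N u, Vmat N v) k p i j + t * cmp (UV_velocity N du dv) k p i j" for t
    by (simp add: cmp_def Umat_def Vmat_def UV_velocity_def)
  show "((\<lambda>t. cmp (?c t) k p i j) has_real_derivative cmp (UV_velocity N du dv) k p i j) (at 0)"
    by (simp only: affine) (auto intro!: derivative_eq_intros)
qed simp

lemma PB_UV_eq_ggpair:
  assumes X: "in_gg N X" and Y: "in_gg N Y"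
  shows "PB N (boldA N) (boldB N) (boldC N) (boldD N) (Umat N u, Vmat N v) X Y
       = ggpair N (UV_velocity N (\<lambda>i. ham_UV N u v X 0 0 i i)
                                 (\<lambda>i. ham_UV N u v X 1 (-1) i (cyc_suc N i))) Y"
    (is "_ = ggpair N ?T Y")
proof -
  have bounded: "bounded_above (cmp Z k)" if "in_gg N Z" for Z k
    using that by (auto simp: cmp_def in_gg_def bounded_above_if_in_g)
  have L: "bounded_above (cmp (Umat N u, Vmat N v) k)" for k
    by (auto simp: cmp_def intro: bounded_above_if_in_g Umat_in_g Vmat_in_g)
  have "lpair N (ham_UV N u v X k) (cmp Y k) = lpair N (cmp ?T k) (cmp Y k)" if "k < 2" for k
  proof (rule lpair_cong_block)
    show "bounded_above (ham_UV N u v X k)"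
      by (simp add: ham_field_def bounded_above_ladd bounded_above_ham_term
          preserves_bounded_above_bold L bounded X)
    fix p i j assume "i < N" "j < N"
    moreover have "k = 0 \<or> k = 1" using \<open>k < 2\<close> by auto
    ultimately show "ham_UV N u v X k p i j = cmp ?T k p i j"
      using ham_UV_U_vanishes[OF X] ham_UV_V_vanishes[OF X]
      by (auto simp: cmp_def UV_velocity_def)
  qed (simp_all add: bounded UV_velocity_in_gg Y)
  then show ?thesis
    by (simp add: PB_eq_lpair_ham_field preserves_bounded_above_bold L bounded X Y ggpair_def
        numeral_2_eq_2)
qed

theorem proposition10:
  fixes N :: nat
  assumes "2 \<le> N"
  shows "poisson_submanifold N (boldA N) (boldB N) (boldC N) (boldD N) (UV_set N)"
  unfolding poisson_submanifold_def
proof (intro conjI ballI allI impI)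
  show "UV_set N \<subseteq> {x. in_gg N x}"
    by (auto simp: UV_set_def in_gg_def Umat_in_g Vmat_in_g)
  fix L X assume "L \<in> UV_set N" and X: "in_gg N X"
  then obtain u v where L: "L = (Umat N u, Vmat N v)"
    by (auto simp: UV_set_def)
  define T where "T = UV_velocity N (\<lambda>i. ham_UV N u v X 0 0 i i)
                                   (\<lambda>i. ham_UV N u v X 1 (-1) i (cyc_suc N i))"
  have "is_hamvf N (boldA N) (boldB N) (boldC N) (boldD N) L X T"
    unfolding is_hamvf_def L T_def using X by (simp add: UV_velocity_in_gg PB_UV_eq_ggpair)
  moreover have "tangent_vec (UV_set N) L T"
    unfolding L T_def by (rule tangent_vec_UV_velocity)
  ultimately show "\<exists>T. is_hamvf N (boldA N) (boldB N) (boldC N) (boldD N) L X T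
                    \<and> tangent_vec (UV_set N) L T"
    by blast
qed

end
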